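(* Let $\alpha\ge1$ and $N\ge2$. If $f,g$ are increasing functions on $\Omega_N$ (integrable, so that the expectations below are defined), then $\pi_{N,\alpha}(fg)\ge\pi_{N,\alpha}(f)\pi_{N,\alpha}(g)$. Moreover, the same inequality holds with $\pi_{N,\alpha}$ replaced by the conditional measure $\pi_{N,\alpha}(\cdot\mid A)$ for any Borel set $A\subset\Omega_N$ with $\pi_{N,\alpha}(A)>0$ that is stable under the operations $\vee$ and $\wedge$ (i.e. $x,x'\in A\Rightarrow x\vee x',x\wedge x'\in A$).
   Context: $\Omega_N=\{x\in\mathbb{R}^{N-1}:0\le x_1\le\dots\le x_{N-1}\le N\}$, $x_0=0$, $x_N=N$; $\pi_{N,\alpha}(dx)=\frac{\Gamma(N\alpha)}{\Gamma(\alpha)^NN^{N\alpha-1}}\prod_{i=1}^N(x_i-x_{i-1})^{\alpha-1}dx$. A function $f$ on $\Omega_N$ is increasing if $x\ge x'$ coordinatewise implies $f(x)\ge f(x')$. $(x\vee x')_i=\max(x_i,x'_i)$ and $(x\wedge x')_i=\min(x_i,x'_i)$. *)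

theory Defs
  imports "HOL-Probability.Probability"
begin

text \<open>Points of Omega_N are represented as extensional functions
  x :: nat => real on the index set {1..<N} (coordinates x_1,...,x_{N-1}),
  i.e. elements of PiE {1..<N} (\<lambda>_. UNIV); the ambient measurable space
  is the product Borel space PiM {1..<N} (\<lambda>_. lborel) = R^{N-1}.\<close>

definition ext_pt :: "nat \<Rightarrow> (nat \<Rightarrow> real) \<Rightarrow> nat \<Rightarrow> real" where
  "ext_pt N x i = (if i = 0 then 0 else if i = N then real N else x i)"

definition Omega :: "nat \<Rightarrow> (nat \<Rightarrow> real) set" where
  "Omega N = {x \<in> PiE {1..<N} (\<lambda>_. UNIV). \<forall>i<N. ext_pt N x i \<le> ext_pt N x (Suc i)}"

text \<open>t^(a) with the convention t^0 = 1 (Isabelle's powr has 0 powr 0 = 0).\<close>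
definition rpow :: "real \<Rightarrow> real \<Rightarrow> real" where
  "rpow t a = (if a = 0 then 1 else t powr a)"

definition pi_dens :: "nat \<Rightarrow> real \<Rightarrow> (nat \<Rightarrow> real) \<Rightarrow> real" where
  "pi_dens N \<alpha> x =
     Gamma (real N * \<alpha>) / (Gamma \<alpha> ^ N * real N powr (real N * \<alpha> - 1)) *
     (\<Prod>i\<in>{1..N}. rpow (ext_pt N x i - ext_pt N x (i - 1)) (\<alpha> - 1))"

definition pi_meas :: "nat \<Rightarrow> real \<Rightarrow> (nat \<Rightarrow> real) measure" where
  "pi_meas N \<alpha> = density (PiM {1..<N} (\<lambda>_. lborel))
      (\<lambda>x. ennreal (indicator (Omega N) x * pi_dens N \<alpha> x))"

definition increasing_on_Omega :: "nat \<Rightarrow> ((nat \<Rightarrow> real) \<Rightarrow> real) \<Rightarrow> bool" where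
  "increasing_on_Omega N f \<longleftrightarrow>
     (\<forall>x\<in>Omega N. \<forall>x'\<in>Omega N. (\<forall>i\<in>{1..<N}. x' i \<le> x i) \<longrightarrow> f x' \<le> f x)"

definition vee :: "nat \<Rightarrow> (nat \<Rightarrow> real) \<Rightarrow> (nat \<Rightarrow> real) \<Rightarrow> nat \<Rightarrow> real" where
  "vee N x x' = restrict (\<lambda>i. max (x i) (x' i)) {1..<N}"

definition wedge :: "nat \<Rightarrow> (nat \<Rightarrow> real) \<Rightarrow> (nat \<Rightarrow> real) \<Rightarrow> nat \<Rightarrow> real" where
  "wedge N x x' = restrict (\<lambda>i. min (x i) (x' i)) {1..<N}"

definition cond_exp :: "nat \<Rightarrow> real \<Rightarrow> (nat \<Rightarrow> real) set \<Rightarrow> ((nat \<Rightarrow> real) \<Rightarrow> real) \<Rightarrow> real" where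
  "cond_exp N \<alpha> A h = (LINT x:A|pi_meas N \<alpha>. h x) / measure (pi_meas N \<alpha>) A"

end

theory Submission
  imports Defs
begin

(* Up to its normalizing constant, the density of pi_{N,alpha} is the Dirichlet kernel
   prod_i (x_i - x_{i-1})^(alpha - 1) on the ordered simplex 0 <= x_1 <= ... <= x_{N-1} <= N.
   For alpha >= 1 it is log-supermodular: for each gap,
   (a1 - a0) (b1 - b0) <= (max a1 b1 - max a0 b0) (min a1 b1 - min a0 b0),
   and t |-> t^(alpha - 1) is monotone.  Multiplying by the indicator of a set that is closed
   under coordinatewise max and min keeps it log-supermodular.
   The FKG inequality for a log-supermodular density on R^I follows from the Ahlswede-Daykin
   four functions theorem, proved by induction on the coordinates with Fubini, the
   one-dimensional case being a symmetrization in (t, s).  This gives the inequality for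
   nonnegative functions; integrable ones are truncated from below, shifted, and passed to
   the limit by dominated convergence.  Finally the normalizing constant makes pi_{N,alpha}
   a probability measure, since the Dirichlet integral is an iterated Beta integral. *)

abbreviation Pi_lborel :: "'i set \<Rightarrow> ('i \<Rightarrow> real) measure" where
  "Pi_lborel I \<equiv> PiM I (\<lambda>_. lborel)"

subsection \<open>The four functions theorem on \<open>\<real>\<^sup>I\<close>\<close>

lemma ennreal_add_le_add_if_mult_le:
  fixes a b c d :: ennreal
  assumes "a \<le> c" "b \<le> c" "a * b \<le> c * d"
  shows "a + b \<le> c + d"
proof (cases "c = \<infinity> \<or> d = \<infinity>")
  case True
  then show ?thesis by auto
next
  case False
  moreover have "a \<noteq> \<infinity>" "b \<noteq> \<infinity>"
    using assms(1,2) False by (auto simp: top_unique)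
  ultimately obtain a' b' c' d' where a': "a = ennreal a'" "0 \<le> a'" and b': "b = ennreal b'" "0 \<le> b'"
    and c': "c = ennreal c'" "0 \<le> c'" and d': "d = ennreal d'" "0 \<le> d'"
    by (cases a; cases b; cases c; cases d) auto
  then have ac: "a' \<le> c'" and bc: "b' \<le> c'" and abcd: "a' * b' \<le> c' * d'"
    using assms by (auto simp: ennreal_mult'' [symmetric])
  have "a' + b' \<le> c' + d'"
  proof (cases "c' = 0")
    case False
    \<comment> \<open>\<open>(c - a)(c - b) \<ge> 0\<close> gives \<open>c (a + b) \<le> c\<^sup>2 + a b \<le> c (c + d)\<close>\<close>
    have "c' * (a' + b') \<le> c' * c' + a' * b'"
      using mult_mono[of 0 "c' - a'" 0 "c' - b'"] ac bc by (simp add: algebra_simps)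
    also have "\<dots> \<le> c' * (c' + d')"
      using abcd by (simp add: algebra_simps)
    finally show ?thesis
      using False c' by (simp add: mult_le_cancel_left_pos)
  qed (use ac bc d' in auto)
  then show ?thesis
    using a' b' c' d' by (simp add: ennreal_plus [symmetric] del: ennreal_plus)
qed

lemma nn_integral_lborel_symmetrized:
  fixes h1 h2 :: "real \<Rightarrow> ennreal"
  assumes [measurable]: "h1 \<in> borel_measurable borel" "h2 \<in> borel_measurable borel"
  shows "(\<integral>\<^sup>+t. \<integral>\<^sup>+s. h1 t * h2 s + h1 s * h2 t \<partial>lborel \<partial>lborel)
    = 2 * ((\<integral>\<^sup>+t. h1 t \<partial>lborel) * (\<integral>\<^sup>+t. h2 t \<partial>lborel))"
proof -
  have "(\<integral>\<^sup>+t. \<integral>\<^sup>+s. h1 t * h2 s + h1 s * h2 t \<partial>lborel \<partial>lborel)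
      = (\<integral>\<^sup>+t. h1 t * (\<integral>\<^sup>+s. h2 s \<partial>lborel) + h2 t * (\<integral>\<^sup>+s. h1 s \<partial>lborel) \<partial>lborel)"
    by (intro nn_integral_cong) (simp add: nn_integral_add nn_integral_cmult nn_integral_multc mult.commute)
  then show ?thesis
    by (simp add: nn_integral_add nn_integral_multc mult.commute mult_2)
qed

lemma four_functions_lborel:
  fixes g1 g2 g3 g4 :: "real \<Rightarrow> ennreal"
  assumes [measurable]: "g1 \<in> borel_measurable borel" "g2 \<in> borel_measurable borel"
    "g3 \<in> borel_measurable borel" "g4 \<in> borel_measurable borel"
  assumes H: "\<And>t s. g1 t * g2 s \<le> g3 (max t s) * g4 (min t s)"
  shows "(\<integral>\<^sup>+t. g1 t \<partial>lborel) * (\<integral>\<^sup>+t. g2 t \<partial>lborel)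
    \<le> (\<integral>\<^sup>+t. g3 t \<partial>lborel) * (\<integral>\<^sup>+t. g4 t \<partial>lborel)"
proof -
  have pointwise: "g1 t * g2 s + g1 s * g2 t \<le> g3 t * g4 s + g3 s * g4 t" for t s
  proof (induction t s rule: linorder_wlog)
    case (le s t)
    have "(g1 t * g2 s) * (g1 s * g2 t) = (g1 t * g2 t) * (g1 s * g2 s)"
      by (simp add: ac_simps)
    also have "\<dots> \<le> (g3 t * g4 t) * (g3 s * g4 s)"
      using H[of t t] H[of s s] by (simp add: mult_mono)
    also have "\<dots> = (g3 t * g4 s) * (g3 s * g4 t)"
      by (simp add: ac_simps)
    \<comment> \<open>the hypothesis at \<open>(t, s)\<close> and \<open>(s, t)\<close> bounds both summands on the left by \<open>g3 t * g4 s\<close>\<close>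
    finally have "g1 t * g2 s + g1 s * g2 t \<le> g3 t * g4 s + g3 s * g4 t"
      using H[of t s] H[of s t] le
      by (intro ennreal_add_le_add_if_mult_le) (simp_all add: max_absorb1 min_absorb2 max_absorb2 min_absorb1)
    then show ?case
      by (simp add: add.commute)
  next
    case (sym t s)
    then show ?case
      by (simp add: add.commute)
  qed
  have "2 * ((\<integral>\<^sup>+t. g1 t \<partial>lborel) * (\<integral>\<^sup>+t. g2 t \<partial>lborel))
      = (\<integral>\<^sup>+t. \<integral>\<^sup>+s. g1 t * g2 s + g1 s * g2 t \<partial>lborel \<partial>lborel)"
    by (simp add: nn_integral_lborel_symmetrized)
  also have "\<dots> \<le> (\<integral>\<^sup>+t. \<integral>\<^sup>+s. g3 t * g4 s + g3 s * g4 t \<partial>lborel \<partial>lborel)"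
    by (intro nn_integral_mono pointwise)
  also have "\<dots> = 2 * ((\<integral>\<^sup>+t. g3 t \<partial>lborel) * (\<integral>\<^sup>+t. g4 t \<partial>lborel))"
    by (simp add: nn_integral_lborel_symmetrized)
  finally show ?thesis
    by (simp add: ennreal_mult_le_mult_iff)
qed

lemma nn_integral_PiM_empty: "(\<integral>\<^sup>+x. f x \<partial>PiM {} M) = f (\<lambda>_. undefined)"
proof -
  have "(\<integral>\<^sup>+x. f x \<partial>PiM {} M) = (\<integral>\<^sup>+x. f (\<lambda>_. undefined) * indicator {\<lambda>_. undefined} x \<partial>PiM {} M)"
    by (intro nn_integral_cong) (auto simp: space_PiM_empty)
  also have "\<dots> = f (\<lambda>_. undefined)"
    by (subst nn_integral_cmult_indicator) (auto simp: sets_PiM_empty)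
  finally show ?thesis .
qed

lemma sup_in_space_Pi_lborel:
  "x \<in> space (Pi_lborel I) \<Longrightarrow> y \<in> space (Pi_lborel I) \<Longrightarrow> sup x y \<in> space (Pi_lborel I)"
  by (auto simp: space_PiM PiE_def extensional_def)

lemma inf_in_space_Pi_lborel:
  "x \<in> space (Pi_lborel I) \<Longrightarrow> y \<in> space (Pi_lborel I) \<Longrightarrow> inf x y \<in> space (Pi_lborel I)"
  by (auto simp: space_PiM PiE_def extensional_def)

lemma upd_in_space_Pi_lborel:
  "x \<in> space (Pi_lborel I) \<Longrightarrow> x(i := t) \<in> space (Pi_lborel (insert i I))"
  by (auto simp: space_PiM PiE_def extensional_def)

lemma upd_measurable:
  fixes f :: "('i \<Rightarrow> real) \<Rightarrow> ennreal"
  assumes "f \<in> borel_measurable (Pi_lborel (insert i I))" "i \<notin> I" "x \<in> space (Pi_lborel I)"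
  shows "(\<lambda>t. f (x(i := t))) \<in> borel_measurable borel"
  using measurable_comp[OF measurable_component_update assms(1), OF assms(3,2)]
  by (simp add: comp_def fun_upd_def)

lemma nn_integral_upd_measurable:
  fixes f :: "('i \<Rightarrow> real) \<Rightarrow> ennreal"
  assumes [measurable]: "f \<in> borel_measurable (Pi_lborel (insert i I))" and "i \<notin> I"
  shows "(\<lambda>x. \<integral>\<^sup>+t. f (x(i := t)) \<partial>lborel) \<in> borel_measurable (Pi_lborel I)"
proof -
  have "(\<lambda>(x, t). f (x(i := t))) \<in> borel_measurable (Pi_lborel I \<Otimes>\<^sub>M lborel)"
    using \<open>i \<notin> I\<close> by measurable
  then show ?thesis
    by (rule lborel.borel_measurable_nn_integral)
qed

theorem four_functions_Pi_lborel:
  fixes f1 f2 f3 f4 :: "('i \<Rightarrow> real) \<Rightarrow> ennreal"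
  assumes "finite I"
    and "f1 \<in> borel_measurable (Pi_lborel I)" "f2 \<in> borel_measurable (Pi_lborel I)"
    and "f3 \<in> borel_measurable (Pi_lborel I)" "f4 \<in> borel_measurable (Pi_lborel I)"
    and "\<And>x y. x \<in> space (Pi_lborel I) \<Longrightarrow> y \<in> space (Pi_lborel I) \<Longrightarrow>
      f1 x * f2 y \<le> f3 (sup x y) * f4 (inf x y)"
  shows "(\<integral>\<^sup>+x. f1 x \<partial>Pi_lborel I) * (\<integral>\<^sup>+x. f2 x \<partial>Pi_lborel I)
    \<le> (\<integral>\<^sup>+x. f3 x \<partial>Pi_lborel I) * (\<integral>\<^sup>+x. f4 x \<partial>Pi_lborel I)"
  using assms
proof (induction I arbitrary: f1 f2 f3 f4 rule: finite_induct)
  case empty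
  then show ?case
    using empty.prems(5)[of "\<lambda>_. undefined" "\<lambda>_. undefined"] by (simp add: nn_integral_PiM_empty)
next
  case (insert i I)
  interpret product_sigma_finite "\<lambda>_. lborel :: real measure" by standard
  \<comment> \<open>Fubini: integrate out the coordinate \<open>i\<close> first.\<close>
  define F where "F f x = (\<integral>\<^sup>+t. f (x(i := t)) \<partial>lborel)"
    for f :: "('i \<Rightarrow> real) \<Rightarrow> ennreal" and x :: "'i \<Rightarrow> real"
  have integral_F: "(\<integral>\<^sup>+x. f x \<partial>Pi_lborel (insert i I)) = (\<integral>\<^sup>+x. F f x \<partial>Pi_lborel I)"
    if "f \<in> borel_measurable (Pi_lborel (insert i I))" for f
    unfolding F_def using that insert.hyps by (subst product_nn_integral_insert) auto
  have "(\<integral>\<^sup>+x. F f1 x \<partial>Pi_lborel I) * (\<integral>\<^sup>+x. F f2 x \<partial>Pi_lborel I)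
      \<le> (\<integral>\<^sup>+x. F f3 x \<partial>Pi_lborel I) * (\<integral>\<^sup>+x. F f4 x \<partial>Pi_lborel I)"
  proof (rule insert.IH)
    show "F f1 \<in> borel_measurable (Pi_lborel I)" "F f2 \<in> borel_measurable (Pi_lborel I)"
      "F f3 \<in> borel_measurable (Pi_lborel I)" "F f4 \<in> borel_measurable (Pi_lborel I)"
      using insert.prems unfolding F_def by (auto intro: nn_integral_upd_measurable)
  next
    fix x y assume x: "x \<in> space (Pi_lborel I)" and y: "y \<in> space (Pi_lborel I)"
    have lattice: "sup x y \<in> space (Pi_lborel I)" "inf x y \<in> space (Pi_lborel I)"
      using x y by (auto intro: sup_in_space_Pi_lborel inf_in_space_Pi_lborel)
    show "F f1 x * F f2 y \<le> F f3 (sup x y) * F f4 (inf x y)"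
      unfolding F_def
    proof (rule four_functions_lborel)
      show "(\<lambda>t. f1 (x(i := t))) \<in> borel_measurable borel" "(\<lambda>t. f2 (y(i := t))) \<in> borel_measurable borel"
        "(\<lambda>t. f3 ((sup x y)(i := t))) \<in> borel_measurable borel"
        "(\<lambda>t. f4 ((inf x y)(i := t))) \<in> borel_measurable borel"
        using insert.prems insert.hyps x y lattice by (auto intro: upd_measurable)
    next
      fix t s :: real
      have sup_upd: "sup (x(i := t)) (y(i := s)) = (sup x y)(i := max t s)"
        and inf_upd: "inf (x(i := t)) (y(i := s)) = (inf x y)(i := min t s)"
        by (auto simp: fun_eq_iff sup_max inf_min)
      show "f1 (x(i := t)) * f2 (y(i := s))
        \<le> f3 ((sup x y)(i := max t s)) * f4 ((inf x y)(i := min t s))"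
        using insert.prems(5)[OF upd_in_space_Pi_lborel[OF x, of i t] upd_in_space_Pi_lborel[OF y, of i s]]
        unfolding sup_upd inf_upd .
    qed
  qed
  then show ?case
    using insert.prems by (simp add: integral_F)
qed

subsection \<open>The FKG inequality for log-supermodular densities\<close>

definition log_supermodular_on :: "'a::lattice set \<Rightarrow> ('a \<Rightarrow> real) \<Rightarrow> bool" where
  "log_supermodular_on S w \<longleftrightarrow> (\<forall>x\<in>S. \<forall>y\<in>S. w x * w y \<le> w (sup x y) * w (inf x y))"

definition lattice_closed :: "'a::lattice set \<Rightarrow> bool" where
  "lattice_closed A \<longleftrightarrow> (\<forall>x\<in>A. \<forall>y\<in>A. sup x y \<in> A \<and> inf x y \<in> A)"

lemma lattice_closed_space_Pi_lborel: "lattice_closed (space (Pi_lborel I))"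
  unfolding lattice_closed_def by (auto intro: sup_in_space_Pi_lborel inf_in_space_Pi_lborel)

lemma log_supermodular_on_subset:
  "log_supermodular_on S w \<Longrightarrow> A \<subseteq> S \<Longrightarrow> log_supermodular_on A w"
  unfolding log_supermodular_on_def by blast

lemma log_supermodular_on_indicator_mult:
  assumes "lattice_closed A" "log_supermodular_on A w" "\<And>x. 0 \<le> w x"
  shows "log_supermodular_on S (\<lambda>x. indicator A x * w x)"
  using assms unfolding log_supermodular_on_def lattice_closed_def
  by (auto simp: indicator_def)

lemma log_supermodular_on_cmult:
  "0 \<le> c \<Longrightarrow> log_supermodular_on S w \<Longrightarrow> log_supermodular_on S (\<lambda>x. c * w x)"
  unfolding log_supermodular_on_def
proof (intro ballI)
  fix x y assume "0 \<le> c" "\<forall>x\<in>S. \<forall>y\<in>S. w x * w y \<le> w (sup x y) * w (inf x y)" "x \<in> S" "y \<in> S"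
  then have "(c * c) * (w x * w y) \<le> (c * c) * (w (sup x y) * w (inf x y))"
    by (intro mult_left_mono) auto
  then show "c * w x * (c * w y) \<le> c * w (sup x y) * (c * w (inf x y))"
    by (simp add: ac_simps)
qed

lemma fkg_nn_integral:
  fixes w f g :: "('i \<Rightarrow> real) \<Rightarrow> real"
  assumes "finite I"
    and [measurable]: "w \<in> borel_measurable (Pi_lborel I)"
    and w_nonneg: "\<And>x. 0 \<le> w x" and w_lsm: "log_supermodular_on (space (Pi_lborel I)) w"
    and [measurable]: "f \<in> borel_measurable (Pi_lborel I)" "g \<in> borel_measurable (Pi_lborel I)"
    and f_nonneg: "\<And>x. 0 \<le> f x" and g_nonneg: "\<And>x. 0 \<le> g x"
    and f_mono: "mono_on {x \<in> space (Pi_lborel I). 0 < w x} f"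
    and g_mono: "mono_on {x \<in> space (Pi_lborel I). 0 < w x} g"
  shows "(\<integral>\<^sup>+x. ennreal (f x * w x) \<partial>Pi_lborel I) * (\<integral>\<^sup>+x. ennreal (g x * w x) \<partial>Pi_lborel I)
    \<le> (\<integral>\<^sup>+x. ennreal (f x * g x * w x) \<partial>Pi_lborel I) * (\<integral>\<^sup>+x. ennreal (w x) \<partial>Pi_lborel I)"
proof (rule four_functions_Pi_lborel[OF \<open>finite I\<close>])
  fix x y assume x: "x \<in> space (Pi_lborel I)" and y: "y \<in> space (Pi_lborel I)"
  have w_sup_inf: "w x * w y \<le> w (sup x y) * w (inf x y)"
    using w_lsm x y unfolding log_supermodular_on_def by blast
  have "(f x * w x) * (g y * w y) \<le> (f (sup x y) * g (sup x y) * w (sup x y)) * w (inf x y)"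
  proof (cases "0 < w x \<and> 0 < w y")
    case True
    \<comment> \<open>log-supermodularity keeps \<open>sup x y\<close> in the support of \<open>w\<close>\<close>
    then have "0 < w (sup x y) * w (inf x y)"
      using w_sup_inf mult_pos_pos[of "w x" "w y"] by linarith
    then have "0 < w (sup x y)"
      using w_nonneg[of "sup x y"] w_nonneg[of "inf x y"] by (auto simp: zero_less_mult_iff)
    then have "sup x y \<in> {x \<in> space (Pi_lborel I). 0 < w x}"
      using x y by (simp add: sup_in_space_Pi_lborel)
    then have "f x \<le> f (sup x y)" "g y \<le> g (sup x y)"
      using True x y by (auto intro!: monotone_onD[OF f_mono] monotone_onD[OF g_mono])
    then have "f x * g y \<le> f (sup x y) * g (sup x y)"
      using f_nonneg g_nonneg by (simp add: mult_mono)
    from mult_mono[OF this w_sup_inf] show ?thesis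
      using f_nonneg g_nonneg w_nonneg by (simp add: ac_simps)
  next
    case False
    then have "w x = 0 \<or> w y = 0"
      using w_nonneg[of x] w_nonneg[of y] by linarith
    then show ?thesis
      using f_nonneg g_nonneg w_nonneg by auto
  qed
  then show "ennreal (f x * w x) * ennreal (g y * w y)
    \<le> ennreal (f (sup x y) * g (sup x y) * w (sup x y)) * ennreal (w (inf x y))"
    using f_nonneg g_nonneg w_nonneg by (simp add: ennreal_mult'' [symmetric] ennreal_leI)
qed simp_all

lemma emeasure_density_space:
  "f \<in> borel_measurable M \<Longrightarrow> emeasure (density M f) (space M) = (\<integral>\<^sup>+x. f x \<partial>M)"
proof -
  assume [measurable]: "f \<in> borel_measurable M"
  have "emeasure (density M f) (space M) = (\<integral>\<^sup>+x. f x * indicator (space M) x \<partial>M)"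
    by (rule emeasure_density) simp_all
  also have "\<dots> = (\<integral>\<^sup>+x. f x \<partial>M)"
    by (rule nn_integral_cong) simp
  finally show ?thesis .
qed

lemma fkg_density_nonneg:
  fixes I :: "'i set" and w f g :: "('i \<Rightarrow> real) \<Rightarrow> real"
  defines "M \<equiv> density (Pi_lborel I) (\<lambda>x. ennreal (w x))"
  assumes "finite I"
    and [measurable]: "w \<in> borel_measurable (Pi_lborel I)"
    and w_nonneg: "\<And>x. 0 \<le> w x" and w_lsm: "log_supermodular_on (space (Pi_lborel I)) w"
    and finite_mass: "emeasure M (space M) \<noteq> \<infinity>"
    and f_nonneg: "\<And>x. 0 \<le> f x" and g_nonneg: "\<And>x. 0 \<le> g x"
    and f_mono: "mono_on {x \<in> space (Pi_lborel I). 0 < w x} f"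
    and g_mono: "mono_on {x \<in> space (Pi_lborel I). 0 < w x} g"
    and f: "integrable M f" and g: "integrable M g" and fg: "integrable M (\<lambda>x. f x * g x)"
  shows "(\<integral>x. f x \<partial>M) * (\<integral>x. g x \<partial>M) \<le> (\<integral>x. f x * g x \<partial>M) * measure M (space M)"
proof -
  have [measurable]: "f \<in> borel_measurable (Pi_lborel I)" "g \<in> borel_measurable (Pi_lborel I)"
    using f g unfolding M_def by auto
  have integral_eq: "ennreal (\<integral>x. h x \<partial>M) = (\<integral>\<^sup>+x. ennreal (h x * w x) \<partial>Pi_lborel I)"
    if "integrable M h" "\<And>x. 0 \<le> h x" for h
  proof -
    have "ennreal (\<integral>x. h x \<partial>M) = (\<integral>\<^sup>+x. ennreal (h x) \<partial>M)"
      using that by (subst nn_integral_eq_integral) auto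
    also have "\<dots> = (\<integral>\<^sup>+x. ennreal (h x * w x) \<partial>Pi_lborel I)"
      using that w_nonneg unfolding M_def
      by (subst nn_integral_density) (auto simp: ennreal_mult'' [symmetric] mult.commute)
    finally show ?thesis .
  qed
  have mass_eq: "ennreal (measure M (space M)) = (\<integral>\<^sup>+x. ennreal (w x) \<partial>Pi_lborel I)"
    using finite_mass unfolding M_def
    by (simp add: emeasure_eq_ennreal_measure[symmetric] emeasure_density_space)
  have "ennreal (\<integral>x. f x \<partial>M) * ennreal (\<integral>x. g x \<partial>M)
      \<le> ennreal (\<integral>x. f x * g x \<partial>M) * ennreal (measure M (space M))"
    using fkg_nn_integral[OF \<open>finite I\<close> _ w_nonneg w_lsm _ _ f_nonneg g_nonneg f_mono g_mono]
    by (simp add: integral_eq f g fg f_nonneg g_nonneg mass_eq)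
  then show ?thesis
    using f_nonneg g_nonneg
    by (simp add: ennreal_mult'' [symmetric] integral_nonneg_AE)
qed

lemma integral_mult_le_if_shifted:
  fixes f g :: "'a \<Rightarrow> real"
  assumes "finite_measure M"
    and f: "integrable M f" and g: "integrable M g" and fg: "integrable M (\<lambda>x. f x * g x)"
    and shifted: "(\<integral>x. f x + c \<partial>M) * (\<integral>x. g x + c \<partial>M)
      \<le> (\<integral>x. (f x + c) * (g x + c) \<partial>M) * measure M (space M)"
  shows "(\<integral>x. f x \<partial>M) * (\<integral>x. g x \<partial>M) \<le> (\<integral>x. f x * g x \<partial>M) * measure M (space M)"
proof -
  interpret finite_measure M by fact
  define m where "m = measure M (space M)"
  have "(\<integral>x. (f x + c) * (g x + c) \<partial>M) = (\<integral>x. (f x * g x + c * f x) + (c * g x + c * c) \<partial>M)"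
    by (intro Bochner_Integration.integral_cong) (auto simp: algebra_simps)
  also have "\<dots> = (\<integral>x. f x * g x \<partial>M) + c * (\<integral>x. f x \<partial>M) + c * (\<integral>x. g x \<partial>M) + m * c * c"
    using f g fg by (simp add: m_def)
  finally show ?thesis
    using shifted f g by (simp add: m_def algebra_simps)
qed

lemma LIMSEQ_max_minus_of_nat: "(\<lambda>n. max x (- real n)) \<longlonglongrightarrow> x"
proof (rule tendsto_eventually)
  obtain n0 :: nat where "- x \<le> real n0"
    using real_arch_simple by blast
  then show "\<forall>\<^sub>F n in sequentially. max x (- real n) = x"
    unfolding eventually_sequentially by (auto intro!: exI[of _ n0])
qed

lemma mono_on_max:
  fixes f :: "'a::order \<Rightarrow> real"
  assumes "mono_on S f"
  shows "mono_on S (\<lambda>x. max (f x) c)"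
proof (rule monotone_onI)
  fix x y assume "x \<in> S" "y \<in> S" "x \<le> y"
  with assms have "f x \<le> f y"
    by (rule monotone_onD)
  then show "max (f x) c \<le> max (f y) c"
    by (simp add: max_def)
qed

lemma fkg_density_bounded_below:
  fixes I :: "'i set" and w f g :: "('i \<Rightarrow> real) \<Rightarrow> real"
  defines "M \<equiv> density (Pi_lborel I) (\<lambda>x. ennreal (w x))"
  assumes "finite I"
    and [measurable]: "w \<in> borel_measurable (Pi_lborel I)"
    and w_nonneg: "\<And>x. 0 \<le> w x" and w_lsm: "log_supermodular_on (space (Pi_lborel I)) w"
    and finite_mass: "emeasure M (space M) \<noteq> \<infinity>"
    and f_bound: "\<And>x. - c \<le> f x" and g_bound: "\<And>x. - c \<le> g x"
    and f_mono: "mono_on {x \<in> space (Pi_lborel I). 0 < w x} f"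
    and g_mono: "mono_on {x \<in> space (Pi_lborel I). 0 < w x} g"
    and f: "integrable M f" and g: "integrable M g" and fg: "integrable M (\<lambda>x. f x * g x)"
  shows "(\<integral>x. f x \<partial>M) * (\<integral>x. g x \<partial>M) \<le> (\<integral>x. f x * g x \<partial>M) * measure M (space M)"
proof -
  interpret finite_measure M
    using finite_mass by (rule finite_measureI)
  have "(\<integral>x. f x + c \<partial>M) * (\<integral>x. g x + c \<partial>M)
      \<le> (\<integral>x. (f x + c) * (g x + c) \<partial>M) * measure M (space M)"
  proof (rule fkg_density_nonneg[OF \<open>finite I\<close> _ w_nonneg w_lsm, folded M_def])
    show "emeasure M (space M) \<noteq> \<infinity>"
      by (fact finite_mass)
    show "0 \<le> f x + c" "0 \<le> g x + c" for x
      using f_bound[of x] g_bound[of x] by linarith+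
    show "mono_on {x \<in> space (Pi_lborel I). 0 < w x} (\<lambda>x. f x + c)"
      "mono_on {x \<in> space (Pi_lborel I). 0 < w x} (\<lambda>x. g x + c)"
      using f_mono g_mono by (simp_all add: monotone_on_def)
    show "integrable M (\<lambda>x. f x + c)" "integrable M (\<lambda>x. g x + c)"
      using f g by auto
    have "(\<lambda>x. (f x + c) * (g x + c)) = (\<lambda>x. f x * g x + c * f x + c * g x + c * c)"
      by (simp add: fun_eq_iff algebra_simps)
    then show "integrable M (\<lambda>x. (f x + c) * (g x + c))"
      using f g fg by simp
  qed simp
  then show ?thesis
    by (rule integral_mult_le_if_shifted[OF finite_measure_axioms f g fg])
qed

theorem fkg_density:
  fixes I :: "'i set" and w f g :: "('i \<Rightarrow> real) \<Rightarrow> real"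
  defines "M \<equiv> density (Pi_lborel I) (\<lambda>x. ennreal (w x))"
  assumes "finite I"
    and [measurable]: "w \<in> borel_measurable (Pi_lborel I)"
    and w_nonneg: "\<And>x. 0 \<le> w x" and w_lsm: "log_supermodular_on (space (Pi_lborel I)) w"
    and finite_mass: "emeasure M (space M) \<noteq> \<infinity>"
    and f_mono: "mono_on {x \<in> space (Pi_lborel I). 0 < w x} f"
    and g_mono: "mono_on {x \<in> space (Pi_lborel I). 0 < w x} g"
    and f: "integrable M f" and g: "integrable M g" and fg: "integrable M (\<lambda>x. f x * g x)"
  shows "(\<integral>x. f x \<partial>M) * (\<integral>x. g x \<partial>M) \<le> (\<integral>x. f x * g x \<partial>M) * measure M (space M)"
proof -
  interpret finite_measure M
    using finite_mass by (rule finite_measureI)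
  \<comment> \<open>Truncate from below, where the inequality is known, and pass to the limit.\<close>
  define F where "F n x = max (f x) (- real n)" for n x
  define G where "G n x = max (g x) (- real n)" for n x
  have [measurable]: "f \<in> borel_measurable M" "g \<in> borel_measurable M"
    using f g by auto
  have dominated: "(\<forall>n. integrable M (H n)) \<and> (\<lambda>n. \<integral>x. H n x \<partial>M) \<longlonglongrightarrow> (\<integral>x. h x \<partial>M)"
    if "integrable M h" "\<And>n. H n \<in> borel_measurable M"
      "\<And>x. (\<lambda>n. H n x) \<longlonglongrightarrow> h x" "\<And>n x. \<bar>H n x\<bar> \<le> \<bar>h x\<bar>"
    for H :: "nat \<Rightarrow> ('i \<Rightarrow> real) \<Rightarrow> real" and h
  proof -
    have "h \<in> borel_measurable M" "integrable M (\<lambda>x. norm (h x))"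
      using that(1) by auto
    moreover have "AE x in M. (\<lambda>n. H n x) \<longlonglongrightarrow> h x" "\<And>n. AE x in M. norm (H n x) \<le> norm (h x)"
      using that(3,4) by auto
    ultimately show ?thesis
      using integrable_dominated_convergence2 integral_dominated_convergence that(2) by blast
  qed
  have F_lim: "(\<forall>n. integrable M (F n)) \<and> (\<lambda>n. \<integral>x. F n x \<partial>M) \<longlonglongrightarrow> (\<integral>x. f x \<partial>M)"
    unfolding F_def by (rule dominated[OF f]) (measurable, auto intro: LIMSEQ_max_minus_of_nat)
  have G_lim: "(\<forall>n. integrable M (G n)) \<and> (\<lambda>n. \<integral>x. G n x \<partial>M) \<longlonglongrightarrow> (\<integral>x. g x \<partial>M)"
    unfolding G_def by (rule dominated[OF g]) (measurable, auto intro: LIMSEQ_max_minus_of_nat)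
  have FG_lim: "(\<forall>n. integrable M (\<lambda>x. F n x * G n x))
      \<and> (\<lambda>n. \<integral>x. F n x * G n x \<partial>M) \<longlonglongrightarrow> (\<integral>x. f x * g x \<partial>M)"
    unfolding F_def G_def
  proof (rule dominated[OF fg])
    show "(\<lambda>n. max (f x) (- real n) * max (g x) (- real n)) \<longlonglongrightarrow> f x * g x" for x
      by (intro tendsto_mult LIMSEQ_max_minus_of_nat)
    show "\<bar>max (f x) (- real n) * max (g x) (- real n)\<bar> \<le> \<bar>f x * g x\<bar>" for n x
      unfolding abs_mult by (intro mult_mono) auto
  qed measurable
  have truncated: "(\<integral>x. F n x \<partial>M) * (\<integral>x. G n x \<partial>M)
      \<le> (\<integral>x. F n x * G n x \<partial>M) * measure M (space M)" for n
  proof (rule fkg_density_bounded_below[where c = "real n", OF \<open>finite I\<close> _ w_nonneg w_lsm, folded M_def])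
    show "mono_on {x \<in> space (Pi_lborel I). 0 < w x} (F n)"
      "mono_on {x \<in> space (Pi_lborel I). 0 < w x} (G n)"
      unfolding F_def G_def using f_mono g_mono by (auto intro: mono_on_max)
    show "- real n \<le> F n x" "- real n \<le> G n x" for x
      by (simp_all add: F_def G_def)
  qed (use finite_mass F_lim G_lim FG_lim in auto)
  have lhs_lim: "(\<lambda>n. (\<integral>x. F n x \<partial>M) * (\<integral>x. G n x \<partial>M)) \<longlonglongrightarrow> (\<integral>x. f x \<partial>M) * (\<integral>x. g x \<partial>M)"
    using F_lim G_lim by (intro tendsto_mult) auto
  have rhs_lim: "(\<lambda>n. (\<integral>x. F n x * G n x \<partial>M) * measure M (space M))
      \<longlonglongrightarrow> (\<integral>x. f x * g x \<partial>M) * measure M (space M)"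
    using FG_lim by (intro tendsto_mult tendsto_const) auto
  show ?thesis
    using truncated by (intro LIMSEQ_le[OF lhs_lim rhs_lim]) auto
qed

lemma set_integral_eq_integral_density_indicator:
  fixes w :: "'a \<Rightarrow> real" and h :: "'a \<Rightarrow> real"
  assumes [measurable]: "A \<in> sets M" "w \<in> borel_measurable M"
    and w_nonneg: "\<And>x. 0 \<le> w x" and h: "integrable (density M (\<lambda>x. ennreal (w x))) h"
  shows "integrable (density M (\<lambda>x. ennreal (indicator A x * w x))) h"
    and "(LINT x:A|density M (\<lambda>x. ennreal (w x)). h x)
      = (\<integral>x. h x \<partial>density M (\<lambda>x. ennreal (indicator A x * w x)))"
proof -
  have [measurable]: "h \<in> borel_measurable M"
    using h by auto
  have "integrable M (\<lambda>x. w x *\<^sub>R h x)"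
    using h w_nonneg by (subst (asm) integrable_density) auto
  then have "integrable M (\<lambda>x. indicator A x *\<^sub>R (w x *\<^sub>R h x))"
    by (rule integrable_mult_indicator[rotated]) simp
  then show "integrable (density M (\<lambda>x. ennreal (indicator A x * w x))) h"
    using w_nonneg by (subst integrable_density) (auto simp: mult_ac)
  have "(LINT x:A|density M (\<lambda>x. ennreal (w x)). h x)
      = (\<integral>x. w x *\<^sub>R (indicator A x *\<^sub>R h x) \<partial>M)"
    unfolding set_lebesgue_integral_def using w_nonneg by (subst integral_density) auto
  also have "\<dots> = (\<integral>x. (indicator A x * w x) *\<^sub>R h x \<partial>M)"
    by (simp add: mult_ac)
  also have "\<dots> = (\<integral>x. h x \<partial>density M (\<lambda>x. ennreal (indicator A x * w x)))"
    using w_nonneg by (subst integral_density) auto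
  finally show "(LINT x:A|density M (\<lambda>x. ennreal (w x)). h x)
      = (\<integral>x. h x \<partial>density M (\<lambda>x. ennreal (indicator A x * w x)))" .
qed

theorem fkg_set_integral:
  fixes I :: "'i set" and w f g :: "('i \<Rightarrow> real) \<Rightarrow> real"
  defines "M \<equiv> density (Pi_lborel I) (\<lambda>x. ennreal (w x))"
  assumes "finite I"
    and [measurable]: "w \<in> borel_measurable (Pi_lborel I)"
    and w_nonneg: "\<And>x. 0 \<le> w x" and w_lsm: "log_supermodular_on (space (Pi_lborel I)) w"
    and A: "A \<in> sets M" "lattice_closed A" "emeasure M A \<noteq> \<infinity>"
    and f_mono: "mono_on {x \<in> space (Pi_lborel I). 0 < w x} f"
    and g_mono: "mono_on {x \<in> space (Pi_lborel I). 0 < w x} g"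
    and f: "integrable M f" and g: "integrable M g" and fg: "integrable M (\<lambda>x. f x * g x)"
  shows "(LINT x:A|M. f x) * (LINT x:A|M. g x) \<le> (LINT x:A|M. f x * g x) * measure M A"
proof -
  have [measurable]: "A \<in> sets (Pi_lborel I)"
    using A(1) by (simp add: M_def)
  define wA where "wA x = indicator A x * w x" for x
  define MA where "MA = density (Pi_lborel I) (\<lambda>x. ennreal (wA x))"
  have [measurable]: "wA \<in> borel_measurable (Pi_lborel I)"
    unfolding wA_def[abs_def] by measurable
  have wA_nonneg: "0 \<le> wA x" for x
    using w_nonneg by (simp add: wA_def)
  have restrict: "integrable MA h \<and> (LINT x:A|M. h x) = (\<integral>x. h x \<partial>MA)"
    if "integrable M h" for h :: "('i \<Rightarrow> real) \<Rightarrow> real"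
    using set_integral_eq_integral_density_indicator[of A "Pi_lborel I" w h] that w_nonneg
    unfolding M_def MA_def wA_def by auto
  have wA_lsm: "log_supermodular_on (space (Pi_lborel I)) wA"
  proof -
    have "A \<subseteq> space (Pi_lborel I)"
      using sets.sets_into_space[OF A(1)] by (simp add: M_def)
    then show ?thesis
      unfolding wA_def
      by (rule log_supermodular_on_indicator_mult[OF A(2) log_supermodular_on_subset[OF w_lsm] w_nonneg])
  qed
  have support: "{x \<in> space (Pi_lborel I). 0 < wA x} \<subseteq> {x \<in> space (Pi_lborel I). 0 < w x}"
    by (auto simp: wA_def indicator_def)
  have mass: "emeasure MA (space MA) = emeasure M A"
  proof -
    have "emeasure MA (space MA) = (\<integral>\<^sup>+x. ennreal (wA x) \<partial>Pi_lborel I)"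
      unfolding MA_def space_density by (rule emeasure_density_space) measurable
    also have "\<dots> = (\<integral>\<^sup>+x. ennreal (w x) * indicator A x \<partial>Pi_lborel I)"
      by (intro nn_integral_cong) (simp add: wA_def indicator_def)
    also have "\<dots> = emeasure M A"
      unfolding M_def by (rule emeasure_density[symmetric]) simp_all
    finally show ?thesis .
  qed
  have "(\<integral>x. f x \<partial>MA) * (\<integral>x. g x \<partial>MA) \<le> (\<integral>x. f x * g x \<partial>MA) * measure MA (space MA)"
    using mass A(3) restrict[OF f] restrict[OF g] restrict[OF fg]
      mono_on_subset[OF f_mono support] mono_on_subset[OF g_mono support]
    by (intro fkg_density[OF \<open>finite I\<close> _ wA_nonneg wA_lsm, folded MA_def]) simp_all
  then show ?thesis
    using restrict[OF f] restrict[OF g] restrict[OF fg] by (simp add: measure_def mass)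
qed

subsection \<open>The Dirichlet kernel\<close>

definition pinned :: "real \<Rightarrow> nat \<Rightarrow> (nat \<Rightarrow> real) \<Rightarrow> nat \<Rightarrow> real" where
  "pinned s k x i = (if i = 0 then 0 else if i = k then s else x i)"

definition ordered_simplex :: "nat \<Rightarrow> real \<Rightarrow> (nat \<Rightarrow> real) set" where
  "ordered_simplex k s =
    {x \<in> space (Pi_lborel {1..<k}). \<forall>i<k. pinned s k x i \<le> pinned s k x (Suc i)}"

definition dirichlet_kernel :: "nat \<Rightarrow> real \<Rightarrow> real \<Rightarrow> (nat \<Rightarrow> real) \<Rightarrow> real" where
  "dirichlet_kernel k \<alpha> s x = (\<Prod>i\<in>{1..k}. rpow (pinned s k x i - pinned s k x (i - 1)) (\<alpha> - 1))"

lemma rpow_nonneg: "0 \<le> rpow t a"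
  by (simp add: rpow_def)

lemma dirichlet_kernel_nonneg: "0 \<le> dirichlet_kernel k \<alpha> s x"
  unfolding dirichlet_kernel_def by (intro prod_nonneg) (auto simp: rpow_nonneg)

lemma pinned_measurable:
  "i \<le> k \<Longrightarrow> (\<lambda>x. pinned s k x i) \<in> borel_measurable (Pi_lborel {1..<k})"
  unfolding pinned_def by (cases "i = 0"; cases "i = k") auto

lemma dirichlet_kernel_measurable [measurable]:
  "dirichlet_kernel k \<alpha> s \<in> borel_measurable (Pi_lborel {1..<k})"
proof -
  have "(\<lambda>x. rpow (pinned s k x i - pinned s k x (i - 1)) (\<alpha> - 1)) \<in> borel_measurable (Pi_lborel {1..<k})"
    if "i \<in> {1..k}" for i
  proof -
    have [measurable]: "(\<lambda>x. pinned s k x i) \<in> borel_measurable (Pi_lborel {1..<k})"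
      "(\<lambda>x. pinned s k x (i - 1)) \<in> borel_measurable (Pi_lborel {1..<k})"
      using that pinned_measurable[of i k s] pinned_measurable[of "i - 1" k s] by auto
    show ?thesis
      unfolding rpow_def by measurable
  qed
  then show ?thesis
    unfolding dirichlet_kernel_def[abs_def] by (intro borel_measurable_prod) auto
qed

lemma ordered_simplex_sets [measurable]: "ordered_simplex k s \<in> sets (Pi_lborel {1..<k})"
proof -
  have "ordered_simplex k s =
    {x \<in> space (Pi_lborel {1..<k}). \<forall>i\<in>{..<k}. pinned s k x i \<le> pinned s k x (Suc i)}"
    unfolding ordered_simplex_def by auto
  also have "\<dots> \<in> sets (Pi_lborel {1..<k})"
  proof (intro sets.sets_Collect_finite_All)
    fix i assume "i \<in> {..<k}"
    then have [measurable]: "(\<lambda>x. pinned s k x i) \<in> borel_measurable (Pi_lborel {1..<k})"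
      "(\<lambda>x. pinned s k x (Suc i)) \<in> borel_measurable (Pi_lborel {1..<k})"
      using pinned_measurable[of i k s] pinned_measurable[of "Suc i" k s] by auto
    show "{x \<in> space (Pi_lborel {1..<k}). pinned s k x i \<le> pinned s k x (Suc i)} \<in> sets (Pi_lborel {1..<k})"
      by measurable
  qed auto
  finally show ?thesis .
qed

lemma ordered_simplex_end_nonneg:
  assumes "x \<in> ordered_simplex k s" "1 \<le> k"
  shows "0 \<le> s"
proof -
  have "pinned s k x 0 \<le> pinned s k x j" if "j \<le> k" for j
    using that assms(1) unfolding ordered_simplex_def
    by (induction j) (auto intro: order_trans)
  from this[of k] show ?thesis
    using assms(2) by (simp add: pinned_def)
qed

lemma pinned_sup: "pinned s k (sup x y) i = max (pinned s k x i) (pinned s k y i)"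
  by (simp add: pinned_def sup_max)

lemma pinned_inf: "pinned s k (inf x y) i = min (pinned s k x i) (pinned s k y i)"
  by (simp add: pinned_def inf_min)

lemma lattice_closed_ordered_simplex: "lattice_closed (ordered_simplex k s)"
  unfolding lattice_closed_def
proof (intro ballI conjI)
  fix x y assume "x \<in> ordered_simplex k s" "y \<in> ordered_simplex k s"
  then show "sup x y \<in> ordered_simplex k s" "inf x y \<in> ordered_simplex k s"
    unfolding ordered_simplex_def
    by (auto simp: pinned_sup pinned_inf intro!: sup_in_space_Pi_lborel inf_in_space_Pi_lborel
        max.mono min.mono)
qed

lemma gaps_mult_le_max_min_gaps:
  fixes a0 a1 b0 b1 :: real
  assumes "a0 \<le> a1" "b0 \<le> b1"
  shows "(a1 - a0) * (b1 - b0) \<le> (max a1 b1 - max a0 b0) * (min a1 b1 - min a0 b0)"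
proof -
  consider "b0 \<le> a0" "b1 \<le> a1" | "a0 \<le> b0" "a1 \<le> b1" | "a0 < b0" "b1 < a1" | "b0 < a0" "a1 < b1"
    by linarith
  then show ?thesis
  proof cases
    case 3
    \<comment> \<open>the gap of \<open>b\<close> lies inside that of \<open>a\<close>\<close>
    have "(a1 - b0) * (b1 - a0) - (a1 - a0) * (b1 - b0) = (a1 - b1) * (b0 - a0)"
      by (simp add: algebra_simps)
    moreover have "0 \<le> (a1 - b1) * (b0 - a0)"
      using 3 by simp
    moreover have e: "max a1 b1 = a1" "max a0 b0 = b0" "min a1 b1 = b1" "min a0 b0 = a0"
      using 3 by auto
    ultimately show ?thesis
      unfolding e by linarith
  next
    case 4
    have "(b1 - a0) * (a1 - b0) - (a1 - a0) * (b1 - b0) = (b1 - a1) * (a0 - b0)"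
      by (simp add: algebra_simps)
    moreover have "0 \<le> (b1 - a1) * (a0 - b0)"
      using 4 by simp
    moreover have e: "max a1 b1 = b1" "max a0 b0 = a0" "min a1 b1 = a1" "min a0 b0 = b0"
      using 4 by auto
    ultimately show ?thesis
      unfolding e by linarith
  qed (simp_all add: max_def min_def mult.commute)
qed

lemma rpow_mult_le_rpow_mult:
  assumes "0 \<le> a" "0 \<le> p" "0 \<le> q" "0 \<le> r" "0 \<le> s" "p * q \<le> r * s"
  shows "rpow p a * rpow q a \<le> rpow r a * rpow s a"
proof (cases "a = 0")
  case False
  have "p powr a * q powr a = (p * q) powr a"
    using assms by (simp add: powr_mult)
  also have "\<dots> \<le> (r * s) powr a"
    using assms by (intro powr_mono2) auto
  also have "\<dots> = r powr a * s powr a"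
    using assms by (simp add: powr_mult)
  finally show ?thesis
    using False by (simp add: rpow_def)
qed (simp add: rpow_def)

lemma log_supermodular_on_dirichlet_kernel:
  assumes "1 \<le> \<alpha>"
  shows "log_supermodular_on (ordered_simplex k s) (dirichlet_kernel k \<alpha> s)"
  unfolding log_supermodular_on_def
proof (intro ballI)
  fix x y assume x: "x \<in> ordered_simplex k s" and y: "y \<in> ordered_simplex k s"
  let ?gap = "\<lambda>z i. rpow (pinned s k z i - pinned s k z (i - 1)) (\<alpha> - 1)"
  have "dirichlet_kernel k \<alpha> s x * dirichlet_kernel k \<alpha> s y = (\<Prod>i\<in>{1..k}. ?gap x i * ?gap y i)"
    by (simp add: dirichlet_kernel_def prod.distrib)
  also have "\<dots> \<le> (\<Prod>i\<in>{1..k}. ?gap (sup x y) i * ?gap (inf x y) i)"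
  proof (intro prod_mono conjI)
    fix i assume "i \<in> {1..k}"
    then obtain j where "i = Suc j" "j < k"
      by (cases i) auto
    then have "pinned s k x (i - 1) \<le> pinned s k x i" "pinned s k y (i - 1) \<le> pinned s k y i"
      using x y unfolding ordered_simplex_def by auto
    then show "?gap x i * ?gap y i \<le> ?gap (sup x y) i * ?gap (inf x y) i"
      unfolding pinned_sup pinned_inf using assms gaps_mult_le_max_min_gaps
      by (intro rpow_mult_le_rpow_mult) (auto simp: max_def min_def)
  qed (simp add: rpow_nonneg)
  also have "\<dots> = dirichlet_kernel k \<alpha> s (sup x y) * dirichlet_kernel k \<alpha> s (inf x y)"
    by (simp add: dirichlet_kernel_def prod.distrib)
  finally show "dirichlet_kernel k \<alpha> s x * dirichlet_kernel k \<alpha> s y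
    \<le> dirichlet_kernel k \<alpha> s (sup x y) * dirichlet_kernel k \<alpha> s (inf x y)" .
qed

lemma pinned_upd: "1 \<le> k \<Longrightarrow> i \<le> k \<Longrightarrow> pinned s (Suc k) (x(k := t)) i = pinned t k x i"
  by (auto simp: pinned_def)

lemma upd_in_ordered_simplex_iff:
  assumes k: "1 \<le> k" and x: "x \<in> space (Pi_lborel {1..<k})"
  shows "x(k := t) \<in> ordered_simplex (Suc k) s \<longleftrightarrow> x \<in> ordered_simplex k t \<and> t \<le> s"
proof -
  let ?y = "x(k := t)"
  have "?y \<in> space (Pi_lborel {1..<Suc k})"
    using upd_in_space_Pi_lborel[OF x, of k t] k by (simp add: atLeastLessThanSuc)
  moreover have "(\<forall>i<Suc k. pinned s (Suc k) ?y i \<le> pinned s (Suc k) ?y (Suc i))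
      \<longleftrightarrow> (\<forall>i<k. pinned s (Suc k) ?y i \<le> pinned s (Suc k) ?y (Suc i))
        \<and> pinned s (Suc k) ?y k \<le> pinned s (Suc k) ?y (Suc k)"
    by (auto simp: less_Suc_eq)
  moreover have "\<dots> \<longleftrightarrow> (\<forall>i<k. pinned t k x i \<le> pinned t k x (Suc i)) \<and> t \<le> s"
    using k by (auto simp: pinned_upd) (auto simp: pinned_def)
  ultimately show ?thesis
    using x unfolding ordered_simplex_def by auto
qed

lemma dirichlet_kernel_upd:
  assumes "1 \<le> k"
  shows "dirichlet_kernel (Suc k) \<alpha> s (x(k := t)) = dirichlet_kernel k \<alpha> t x * rpow (s - t) (\<alpha> - 1)"
proof -
  have "(\<Prod>i\<in>{1..k}. rpow (pinned s (Suc k) (x(k := t)) i - pinned s (Suc k) (x(k := t)) (i - 1)) (\<alpha> - 1))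
      = dirichlet_kernel k \<alpha> t x"
    unfolding dirichlet_kernel_def using assms by (intro prod.cong) (auto simp: pinned_upd)
  moreover have "pinned s (Suc k) (x(k := t)) (Suc k) - pinned s (Suc k) (x(k := t)) k = s - t"
    using assms by (auto simp: pinned_def)
  ultimately show ?thesis
    by (simp add: dirichlet_kernel_def)
qed

lemma nn_integral_beta_kernel:
  fixes a b s :: real
  assumes a: "0 < a" and b: "0 < b" and s: "0 < s"
  shows "(\<integral>\<^sup>+t. ennreal (indicator {0<..<s} t * (t powr (a - 1) * (s - t) powr (b - 1))) \<partial>lborel)
    = ennreal (s powr (a + b - 1) * Beta a b)"
proof -
  have "((\<lambda>u. u powr (a - 1) * (1 - u) powr (b - 1)) has_integral Beta a b) {0<..<1}"
    using has_integral_Beta_real[OF a b] by (simp add: has_integral_Icc_iff_Ioo)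
  then have beta: "(\<integral>\<^sup>+u. ennreal (u powr (a - 1) * (1 - u) powr (b - 1)) * indicator {0<..<1} u \<partial>lborel)
      = ennreal (Beta a b)"
    by (rule nn_integral_has_integral_lebesgue'[rotated]) auto
  \<comment> \<open>substitute \<open>t = s u\<close>\<close>
  have "(\<integral>\<^sup>+t. ennreal (indicator {0<..<s} t * (t powr (a - 1) * (s - t) powr (b - 1))) \<partial>lborel)
      = ennreal s * (\<integral>\<^sup>+u. ennreal (indicator {0<..<s} (0 + s * u)
          * ((0 + s * u) powr (a - 1) * (s - (0 + s * u)) powr (b - 1))) \<partial>lborel)"
    using s by (subst nn_integral_real_affine[where c = s and t = 0]) auto
  also have "\<dots> = ennreal s * (\<integral>\<^sup>+u. ennreal (s powr (a - 1) * s powr (b - 1))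
      * (ennreal (u powr (a - 1) * (1 - u) powr (b - 1)) * indicator {0<..<1} u) \<partial>lborel)"
  proof (intro arg_cong2[where f = "(*)"] refl nn_integral_cong)
    fix u :: real
    have "s * u \<in> {0<..<s} \<longleftrightarrow> u \<in> {0<..<1}"
      using s by (auto simp: zero_less_mult_iff mult_less_cancel_left1)
    moreover have "s - s * u = s * (1 - u)"
      by (simp add: algebra_simps)
    ultimately show "ennreal (indicator {0<..<s} (0 + s * u) * ((0 + s * u) powr (a - 1) * (s - (0 + s * u)) powr (b - 1)))
      = ennreal (s powr (a - 1) * s powr (b - 1)) * (ennreal (u powr (a - 1) * (1 - u) powr (b - 1)) * indicator {0<..<1} u)"
      using s by (auto simp: indicator_def powr_mult ennreal_mult'' [symmetric] mult_ac)
  qed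
  also have "\<dots> = ennreal s * (ennreal (s powr (a - 1) * s powr (b - 1)) * ennreal (Beta a b))"
    by (subst nn_integral_cmult) (auto simp: beta)
  also have "\<dots> = ennreal (s powr (a + b - 1) * Beta a b)"
  proof -
    have "s powr (a + b - 1) = s powr (1 + (a - 1) + (b - 1))"
      by (simp add: algebra_simps)
    also have "\<dots> = s * s powr (a - 1) * s powr (b - 1)"
      using s by (simp only: powr_add) simp
    finally have "s powr (a + b - 1) = s * s powr (a - 1) * s powr (b - 1)" .
    moreover have "0 \<le> Beta a b"
      using a b by (simp add: Beta_def less_imp_le)
    ultimately show ?thesis
      using s by (simp add: ennreal_mult'' [symmetric] mult_ac)
  qed
  finally show ?thesis .
qed

definition dirichlet_integral :: "nat \<Rightarrow> real \<Rightarrow> real \<Rightarrow> ennreal" where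
  "dirichlet_integral k \<alpha> s = (\<integral>\<^sup>+x. ennreal (indicator (ordered_simplex k s) x * dirichlet_kernel k \<alpha> s x) \<partial>Pi_lborel {1..<k})"

lemma dirichlet_integrand_measurable [measurable]:
  "(\<lambda>x. ennreal (indicator (ordered_simplex k s) x * dirichlet_kernel k \<alpha> s x))
    \<in> borel_measurable (Pi_lborel {1..<k})"
  by measurable

lemma dirichlet_integral_neg: "1 \<le> k \<Longrightarrow> s < 0 \<Longrightarrow> dirichlet_integral k \<alpha> s = 0"
  using ordered_simplex_end_nonneg[of _ k s] by (force simp: dirichlet_integral_def)

lemma dirichlet_integral_Suc:
  assumes k: "1 \<le> k"
  shows "dirichlet_integral (Suc k) \<alpha> s
    = (\<integral>\<^sup>+t. ennreal (indicator {..s} t * rpow (s - t) (\<alpha> - 1)) * dirichlet_integral k \<alpha> t \<partial>lborel)"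
proof -
  interpret product_sigma_finite "\<lambda>_. lborel :: real measure" by standard
  have ins: "{1..<Suc k} = insert k {1..<k}"
    using k by auto
  \<comment> \<open>Fubini, integrating the last coordinate \<open>x\<^sub>k = t\<close> outermost\<close>
  have "dirichlet_integral (Suc k) \<alpha> s = (\<integral>\<^sup>+t. \<integral>\<^sup>+x. ennreal (indicator (ordered_simplex (Suc k) s) (x(k := t))
      * dirichlet_kernel (Suc k) \<alpha> s (x(k := t))) \<partial>Pi_lborel {1..<k} \<partial>lborel)"
    unfolding dirichlet_integral_def ins
    by (rule product_nn_integral_insert_rev) (use dirichlet_integrand_measurable[of "Suc k" s \<alpha>] ins in auto)
  also have "\<dots> = (\<integral>\<^sup>+t. \<integral>\<^sup>+x. ennreal (indicator {..s} t * rpow (s - t) (\<alpha> - 1))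
      * ennreal (indicator (ordered_simplex k t) x * dirichlet_kernel k \<alpha> t x) \<partial>Pi_lborel {1..<k} \<partial>lborel)"
  proof (intro nn_integral_cong)
    fix t x assume x: "x \<in> space (Pi_lborel {1..<k})"
    show "ennreal (indicator (ordered_simplex (Suc k) s) (x(k := t)) * dirichlet_kernel (Suc k) \<alpha> s (x(k := t)))
      = ennreal (indicator {..s} t * rpow (s - t) (\<alpha> - 1))
        * ennreal (indicator (ordered_simplex k t) x * dirichlet_kernel k \<alpha> t x)"
      using upd_in_ordered_simplex_iff[OF k x, of t s] dirichlet_kernel_upd[OF k, of \<alpha> s x t]
      by (auto simp: indicator_def ennreal_mult'' [symmetric] rpow_nonneg dirichlet_kernel_nonneg mult_ac)
  qed
  also have "\<dots> = (\<integral>\<^sup>+t. ennreal (indicator {..s} t * rpow (s - t) (\<alpha> - 1)) * dirichlet_integral k \<alpha> t \<partial>lborel)"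
    unfolding dirichlet_integral_def by (intro nn_integral_cong nn_integral_cmult dirichlet_integrand_measurable)
  finally show ?thesis .
qed

lemma dirichlet_integral_Suc_eq_Beta:
  assumes \<alpha>: "0 < \<alpha>" and k: "1 \<le> k" and s: "0 < s" and c: "0 \<le> c"
    and D: "\<And>t. 0 < t \<Longrightarrow> dirichlet_integral k \<alpha> t = ennreal (c * t powr (real k * \<alpha> - 1))"
  shows "dirichlet_integral (Suc k) \<alpha> s
    = ennreal (c * (s powr (real k * \<alpha> + \<alpha> - 1) * Beta (real k * \<alpha>) \<alpha>))"
proof -
  have "dirichlet_integral (Suc k) \<alpha> s
      = (\<integral>\<^sup>+t. ennreal (indicator {..s} t * rpow (s - t) (\<alpha> - 1)) * dirichlet_integral k \<alpha> t \<partial>lborel)"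
    by (rule dirichlet_integral_Suc[OF k])
  also have "\<dots> = (\<integral>\<^sup>+t. ennreal c * ennreal (indicator {0<..<s} t
      * (t powr (real k * \<alpha> - 1) * (s - t) powr (\<alpha> - 1))) \<partial>lborel)"
  proof (intro nn_integral_cong_AE)
    have "AE t in lborel. t \<notin> {0, s}"
      by (intro AE_not_in countable_imp_null_set_lborel) auto
    then show "AE t in lborel. ennreal (indicator {..s} t * rpow (s - t) (\<alpha> - 1)) * dirichlet_integral k \<alpha> t
      = ennreal c * ennreal (indicator {0<..<s} t * (t powr (real k * \<alpha> - 1) * (s - t) powr (\<alpha> - 1)))"
    proof eventually_elim
      case (elim t)
      consider "t < 0" | "0 < t" "t < s" | "s < t"
        using elim by force
      then show ?case
      proof cases
        case 1
        then show ?thesis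
          using dirichlet_integral_neg[OF k] s by (auto simp: indicator_def)
      next
        case 2
        then show ?thesis
          using D[of t] c by (simp add: indicator_def rpow_def ennreal_mult'' [symmetric] mult_ac)
      qed (auto simp: indicator_def)
    qed
  qed
  also have "\<dots> = ennreal c * ennreal (s powr (real k * \<alpha> + \<alpha> - 1) * Beta (real k * \<alpha>) \<alpha>)"
    using k s \<alpha> by (simp add: nn_integral_cmult nn_integral_beta_kernel)
  finally show ?thesis
    by (simp only: ennreal_mult'[OF c])
qed

theorem dirichlet_integral_eq:
  assumes \<alpha>: "0 < \<alpha>" and k: "1 \<le> k"
  shows "0 < s \<Longrightarrow> dirichlet_integral k \<alpha> s = ennreal (Gamma \<alpha> ^ k / Gamma (real k * \<alpha>) * s powr (real k * \<alpha> - 1))"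
  using k
proof (induction k arbitrary: s rule: nat_induct_at_least)
  case base
  have "(\<lambda>_. undefined) \<in> ordered_simplex 1 s"
    using base unfolding ordered_simplex_def by (auto simp: pinned_def space_PiM_empty)
  moreover have "dirichlet_kernel 1 \<alpha> s (\<lambda>_. undefined) = s powr (\<alpha> - 1)"
    using base by (auto simp: dirichlet_kernel_def pinned_def rpow_def)
  ultimately show ?case
    using Gamma_real_pos[OF \<alpha>] by (simp add: dirichlet_integral_def nn_integral_PiM_empty)
next
  case (Suc k)
  define c where "c = Gamma \<alpha> ^ k / Gamma (real k * \<alpha>)"
  have pos: "0 < Gamma (real k * \<alpha>)" "0 < Gamma \<alpha>" "0 < Gamma (real k * \<alpha> + \<alpha>)"
    using \<alpha> Suc.hyps by (auto intro!: add_pos_pos)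
  then have "0 \<le> c"
    unfolding c_def by simp
  then have "dirichlet_integral (Suc k) \<alpha> s
      = ennreal (c * (s powr (real k * \<alpha> + \<alpha> - 1) * Beta (real k * \<alpha>) \<alpha>))"
    using Suc by (intro dirichlet_integral_Suc_eq_Beta[OF \<alpha>]) (simp_all add: c_def)
  also have "c * (s powr (real k * \<alpha> + \<alpha> - 1) * Beta (real k * \<alpha>) \<alpha>)
      = Gamma \<alpha> ^ Suc k / Gamma (real (Suc k) * \<alpha>) * s powr (real (Suc k) * \<alpha> - 1)"
    using pos unfolding c_def Beta_def by (simp add: field_simps distrib_right)
  finally show ?case .
qed

subsection \<open>The measure \<open>\<pi>\<^sub>N\<^sub>,\<^sub>\<alpha>\<close>\<close>

lemma ext_pt_eq_pinned: "ext_pt N = pinned (real N) N"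
  by (simp add: fun_eq_iff ext_pt_def pinned_def)

lemma Omega_eq_ordered_simplex: "Omega N = ordered_simplex N (real N)"
  by (simp add: Omega_def ordered_simplex_def ext_pt_eq_pinned space_PiM)

lemma pi_dens_eq_dirichlet_kernel:
  "pi_dens N \<alpha> x = Gamma (real N * \<alpha>) / (Gamma \<alpha> ^ N * real N powr (real N * \<alpha> - 1))
    * dirichlet_kernel N \<alpha> (real N) x"
  by (simp add: pi_dens_def dirichlet_kernel_def ext_pt_eq_pinned)

lemma pi_dens_nonneg:
  assumes "0 < \<alpha>" "1 \<le> N"
  shows "0 \<le> pi_dens N \<alpha> x"
  using assms unfolding pi_dens_eq_dirichlet_kernel
  by (intro mult_nonneg_nonneg divide_nonneg_pos dirichlet_kernel_nonneg) auto

lemma pi_weight_measurable [measurable]: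
  "(\<lambda>x. indicator (Omega N) x * pi_dens N \<alpha> x) \<in> borel_measurable (Pi_lborel {1..<N})"
  unfolding Omega_eq_ordered_simplex pi_dens_eq_dirichlet_kernel by measurable

lemma prob_space_pi_meas:
  assumes \<alpha>: "0 < \<alpha>" and N: "1 \<le> N"
  shows "prob_space (pi_meas N \<alpha>)"
proof
  define K where "K = Gamma (real N * \<alpha>) / (Gamma \<alpha> ^ N * real N powr (real N * \<alpha> - 1))"
  have K: "0 \<le> K"
    unfolding K_def using assms by (intro divide_nonneg_pos) auto
  have "emeasure (pi_meas N \<alpha>) (space (pi_meas N \<alpha>))
      = (\<integral>\<^sup>+x. ennreal (indicator (Omega N) x * pi_dens N \<alpha> x) \<partial>Pi_lborel {1..<N})"
    unfolding pi_meas_def space_density by (rule emeasure_density_space) measurable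
  also have "\<dots> = (\<integral>\<^sup>+x. ennreal K * ennreal (indicator (ordered_simplex N (real N)) x
      * dirichlet_kernel N \<alpha> (real N) x) \<partial>Pi_lborel {1..<N})"
  proof (rule nn_integral_cong)
    fix x
    have "indicator (Omega N) x * pi_dens N \<alpha> x
        = K * (indicator (ordered_simplex N (real N)) x * dirichlet_kernel N \<alpha> (real N) x)"
      unfolding K_def pi_dens_eq_dirichlet_kernel Omega_eq_ordered_simplex by (simp add: mult_ac)
    then show "ennreal (indicator (Omega N) x * pi_dens N \<alpha> x)
        = ennreal K * ennreal (indicator (ordered_simplex N (real N)) x * dirichlet_kernel N \<alpha> (real N) x)"
      using K by (simp add: ennreal_mult dirichlet_kernel_nonneg)
  qed
  also have "\<dots> = ennreal K * dirichlet_integral N \<alpha> (real N)"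
    unfolding dirichlet_integral_def by (rule nn_integral_cmult) (rule dirichlet_integrand_measurable)
  also have "\<dots> = ennreal (K * (Gamma \<alpha> ^ N / Gamma (real N * \<alpha>) * real N powr (real N * \<alpha> - 1)))"
    using dirichlet_integral_eq[OF \<alpha> N, of "real N"] N by (subst ennreal_mult'[OF K]) simp
  also have "\<dots> = 1"
  proof -
    have "0 < Gamma \<alpha>" "0 < Gamma (real N * \<alpha>)"
      using assms by auto
    then show ?thesis
      unfolding K_def using N by (simp add: field_simps)
  qed
  finally show "emeasure (pi_meas N \<alpha>) (space (pi_meas N \<alpha>)) = 1" .
qed

lemma log_supermodular_pi_weight:
  assumes "1 \<le> \<alpha>" "1 \<le> N"
  shows "log_supermodular_on S (\<lambda>x. indicator (Omega N) x * pi_dens N \<alpha> x)"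
  unfolding Omega_eq_ordered_simplex pi_dens_eq_dirichlet_kernel using assms
  by (intro log_supermodular_on_indicator_mult log_supermodular_on_cmult
      lattice_closed_ordered_simplex log_supermodular_on_dirichlet_kernel
      mult_nonneg_nonneg divide_nonneg_pos dirichlet_kernel_nonneg) auto

lemma increasing_on_Omega_imp_mono_on: "increasing_on_Omega N f \<Longrightarrow> mono_on (Omega N) f"
  unfolding increasing_on_Omega_def by (auto intro!: monotone_onI simp: le_fun_def)

theorem fkg_pi_meas_set_integral:
  assumes \<alpha>: "1 \<le> \<alpha>" and N: "1 \<le> N"
    and f_inc: "increasing_on_Omega N f" and g_inc: "increasing_on_Omega N g"
    and f: "integrable (pi_meas N \<alpha>) f" and g: "integrable (pi_meas N \<alpha>) g"
    and fg: "integrable (pi_meas N \<alpha>) (\<lambda>x. f x * g x)"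
    and A: "A \<in> sets (pi_meas N \<alpha>)" "lattice_closed A"
  shows "(LINT x:A|pi_meas N \<alpha>. f x) * (LINT x:A|pi_meas N \<alpha>. g x)
    \<le> (LINT x:A|pi_meas N \<alpha>. f x * g x) * measure (pi_meas N \<alpha>) A"
proof -
  interpret prob_space "pi_meas N \<alpha>"
    using \<alpha> N by (intro prob_space_pi_meas) auto
  have support: "{x \<in> space (Pi_lborel {1..<N}). 0 < indicator (Omega N) x * pi_dens N \<alpha> x} \<subseteq> Omega N"
    by (auto simp: indicator_def split: if_splits)
  show ?thesis
    unfolding pi_meas_def
  proof (rule fkg_set_integral[OF _ pi_weight_measurable _ log_supermodular_pi_weight[OF \<alpha> N]])
    show "0 \<le> indicator (Omega N) x * pi_dens N \<alpha> x" for x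
      using \<alpha> N pi_dens_nonneg[of \<alpha> N x] by simp
    show "mono_on {x \<in> space (Pi_lborel {1..<N}). 0 < indicator (Omega N) x * pi_dens N \<alpha> x} f"
      "mono_on {x \<in> space (Pi_lborel {1..<N}). 0 < indicator (Omega N) x * pi_dens N \<alpha> x} g"
      using monotone_on_subset[OF increasing_on_Omega_imp_mono_on[OF f_inc] support]
        monotone_on_subset[OF increasing_on_Omega_imp_mono_on[OF g_inc] support] by auto
    show "emeasure (density (Pi_lborel {1..<N}) (\<lambda>x. ennreal (indicator (Omega N) x * pi_dens N \<alpha> x))) A \<noteq> \<infinity>"
      unfolding pi_meas_def[symmetric] using emeasure_finite[of A] by simp
  qed (use A f g fg in \<open>simp_all add: pi_meas_def\<close>)
qed

lemma vee_eq_sup: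
  "x \<in> space (Pi_lborel {1..<N}) \<Longrightarrow> y \<in> space (Pi_lborel {1..<N}) \<Longrightarrow> vee N x y = sup x y"
  unfolding vee_def by (auto simp: fun_eq_iff space_PiM PiE_def extensional_def sup_max)

lemma wedge_eq_inf:
  "x \<in> space (Pi_lborel {1..<N}) \<Longrightarrow> y \<in> space (Pi_lborel {1..<N}) \<Longrightarrow> wedge N x y = inf x y"
  unfolding wedge_def by (auto simp: fun_eq_iff space_PiM PiE_def extensional_def inf_min)

theorem proposition2p3:
  fixes N :: nat and \<alpha> :: real and f g :: "(nat \<Rightarrow> real) \<Rightarrow> real"
  assumes "\<alpha> \<ge> 1" and "N \<ge> 2"
    and "increasing_on_Omega N f" and "increasing_on_Omega N g"
    and "integrable (pi_meas N \<alpha>) f" and "integrable (pi_meas N \<alpha>) g"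
    and "integrable (pi_meas N \<alpha>) (\<lambda>x. f x * g x)"
  shows "(\<integral>x. f x * g x \<partial>pi_meas N \<alpha>) \<ge> (\<integral>x. f x \<partial>pi_meas N \<alpha>) * (\<integral>x. g x \<partial>pi_meas N \<alpha>)
    \<and> (\<forall>A. A \<in> sets (pi_meas N \<alpha>) \<and> A \<subseteq> Omega N \<and> measure (pi_meas N \<alpha>) A > 0
           \<and> (\<forall>x\<in>A. \<forall>x'\<in>A. vee N x x' \<in> A \<and> wedge N x x' \<in> A) \<longrightarrow>
         cond_exp N \<alpha> A (\<lambda>x. f x * g x) \<ge> cond_exp N \<alpha> A f * cond_exp N \<alpha> A g)"
proof -
  let ?\<pi> = "pi_meas N \<alpha>"
  interpret prob_space ?\<pi>
    using assms(1,2) by (intro prob_space_pi_meas) auto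
  have fkg: "(LINT x:A|?\<pi>. f x) * (LINT x:A|?\<pi>. g x) \<le> (LINT x:A|?\<pi>. f x * g x) * measure ?\<pi> A"
    if "A \<in> sets ?\<pi>" "lattice_closed A" for A
    using fkg_pi_meas_set_integral[OF _ _ assms(3-7) that] assms(1,2) by simp
  have "lattice_closed (space ?\<pi>)"
    using lattice_closed_space_Pi_lborel by (simp add: pi_meas_def)
  then have "(\<integral>x. f x \<partial>?\<pi>) * (\<integral>x. g x \<partial>?\<pi>) \<le> (\<integral>x. f x * g x \<partial>?\<pi>)"
    using fkg[OF sets.top] by (simp add: set_integral_space assms(5-7) prob_space)
  moreover have "cond_exp N \<alpha> A f * cond_exp N \<alpha> A g \<le> cond_exp N \<alpha> A (\<lambda>x. f x * g x)"
    if A: "A \<in> sets ?\<pi>" "A \<subseteq> Omega N" "0 < measure ?\<pi> A"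
      and closed: "\<forall>x\<in>A. \<forall>x'\<in>A. vee N x x' \<in> A \<and> wedge N x x' \<in> A" for A
  proof -
    have "A \<subseteq> space (Pi_lborel {1..<N})"
      using A(2) by (auto simp: Omega_def space_PiM)
    then have "lattice_closed A"
      using closed unfolding lattice_closed_def by (metis subsetD vee_eq_sup wedge_eq_inf)
    then show ?thesis
      using fkg[OF A(1)] A(3) by (simp add: cond_exp_def field_simps)
  qed
  ultimately show ?thesis
    by auto
qed

end
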